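(* Consider the discrete setting described in the context, with constants $0<\gamma_1<\rho_\infty^*$ and $\gamma_2>0$. Given any $(\mathfrak f^n_{ij},\mathfrak g^n_{ij})_{i\in\mathcal I,j\in\mathcal J}$ (real numbers), the truncated scheme $$\frac{\mathfrak f^{n+1}_{ij}-\mathfrak f^n_{ij}}{\Delta t}+\frac{1}{\Delta x\Delta v}\big(\mathcal F^{n+1}_{i+\frac12,j}-\mathcal F^{n+1}_{i-\frac12,j}\big)=\chi_{1,j}-\tilde\rho^{n+1}_{\mathfrak g,i}\tilde{\mathfrak f}^{n+1}_{ij},$$ $$\frac{\mathfrak g^{n+1}_{ij}-\mathfrak g^n_{ij}}{\Delta t}+\frac{1}{\Delta x\Delta v}\big(\mathcal G^{n+1}_{i+\frac12,j}-\mathcal G^{n+1}_{i-\frac12,j}\big)=\chi_{2,j}-\tilde\rho^{n+1}_{\mathfrak f,i}\tilde{\mathfrak g}^{n+1}_{ij}$$ ($i\in\mathcal I$, $j\in\mathcal J$) admits at least one solution $(\mathfrak f^{n+1}_{ij},\mathfrak g^{n+1}_{ij})_{i\in\mathcal I,j\in\mathcal J}$.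
   Context: Space mesh: $N$ uniform cells of length $\Delta x$, $i\in\mathcal I=\mathbb Z/N\mathbb Z$ (periodic). Velocity mesh: $\Delta v=v^*/L$, $j\in\mathcal J=\{-L+1,\dots,L\}$, $v_j=(j-\tfrac12)\Delta v$. Time step $\Delta t>0$; $\lambda=\Delta x/(2\Delta t)$. $\rho_\infty^*>0$ a given constant. For $k=1,2$: $\chi_{k,j}>0$, $\chi_{k,j}=\chi_{k,1-j}$, $\sum_j\Delta v\chi_{k,j}=1$. Fluxes: $\mathcal F^{n+1}_{i+\frac12,j}=\Delta v\frac{v_j}{2}(\mathfrak f^{n+1}_{i+1,j}+\mathfrak f^{n+1}_{ij})-\Delta v\lambda(\mathfrak f^{n+1}_{i+1,j}-\mathfrak f^{n+1}_{ij})$, $\mathcal G$ likewise with $\mathfrak g$. Truncations: $\tilde{\mathfrak f}_{ij}=\min\big(\max(\mathfrak f_{ij},(\rho_\infty^*-\gamma_1)\chi_{1,j}),(\rho_\infty^*+\gamma_2)\chi_{1,j}\big)$ and $\tilde{\mathfrak g}_{ij}=\min\big(\max(\mathfrak g_{ij},(\rho_\infty^*+\gamma_2)^{-1}\chi_{2,j}),(\rho_\infty^*-\gamma_1)^{-1}\chi_{2,j}\big)$; truncated densities $\tilde\rho_{\mathfrak f,i}=\sum_j\Delta v\,\tilde{\mathfrak f}_{ij}$, $\tilde\rho_{\mathfrak g,i}=\sum_j\Delta v\,\tilde{\mathfrak g}_{ij}$ (all evaluated at level $n+1$ in the scheme). *)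

theory Defs
  imports "HOL-Analysis.Analysis"
begin

text \<open>Discrete setting. Space cells i in {0..<N} (periodic, indices taken mod N),
velocity indices j in {-L+1..L}, v_j = (j - 1/2) dv, dv = vstar / L,
lambda = dx / (2 dt).\<close>

definition vel_idx :: "nat \<Rightarrow> int set" where
  "vel_idx L = {- int L + 1 .. int L}"

definition dvel :: "real \<Rightarrow> nat \<Rightarrow> real" where
  "dvel vstar L = vstar / real L"

definition vnode :: "real \<Rightarrow> nat \<Rightarrow> int \<Rightarrow> real" where
  "vnode vstar L j = (real_of_int j - 1/2) * dvel vstar L"

text \<open>Numerical flux at interface i+1/2 (i+1 taken mod N).\<close>
definition flux :: "nat \<Rightarrow> real \<Rightarrow> nat \<Rightarrow> real \<Rightarrow> real \<Rightarrow> (nat \<Rightarrow> int \<Rightarrow> real) \<Rightarrow> nat \<Rightarrow> int \<Rightarrow> real" where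
  "flux N vstar L dx dt h i j =
     dvel vstar L * (vnode vstar L j / 2) * (h ((i + 1) mod N) j + h i j)
     - dvel vstar L * (dx / (2 * dt)) * (h ((i + 1) mod N) j - h i j)"

definition trunc_f :: "real \<Rightarrow> real \<Rightarrow> real \<Rightarrow> (int \<Rightarrow> real) \<Rightarrow> (nat \<Rightarrow> int \<Rightarrow> real) \<Rightarrow> nat \<Rightarrow> int \<Rightarrow> real" where
  "trunc_f rho g1 g2 chi1 f i j =
     min (max (f i j) ((rho - g1) * chi1 j)) ((rho + g2) * chi1 j)"

definition trunc_g :: "real \<Rightarrow> real \<Rightarrow> real \<Rightarrow> (int \<Rightarrow> real) \<Rightarrow> (nat \<Rightarrow> int \<Rightarrow> real) \<Rightarrow> nat \<Rightarrow> int \<Rightarrow> real" where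
  "trunc_g rho g1 g2 chi2 g i j =
     min (max (g i j) (inverse (rho + g2) * chi2 j)) (inverse (rho - g1) * chi2 j)"

definition trunc_dens :: "real \<Rightarrow> nat \<Rightarrow> (nat \<Rightarrow> int \<Rightarrow> real) \<Rightarrow> nat \<Rightarrow> real" where
  "trunc_dens vstar L ht i = (\<Sum>j\<in>vel_idx L. dvel vstar L * ht i j)"

end

theory Submission
  imports Defs "HOL-Homology.Homology"
begin

(* The residual of the implicit scheme is a continuous map on the finite-dimensional space of
   grid functions. Pairing it with its argument gives at least |x|^2/dt - C |x|: the numerical
   flux is dissipative (summation by parts on the periodic grid leaves only the numerical
   viscosity, a sum of squares) and the truncated reaction terms are bounded. So the residual
   points outwards on a large sphere, and the acute-angle form of Brouwer's theorem, which
   follows from the non-contractibility of spheres, yields a zero. *)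

definition sphere_normalize :: "nat \<Rightarrow> (nat \<Rightarrow> real) \<Rightarrow> nat \<Rightarrow> real" where
  "sphere_normalize m y = (\<lambda>i. y i / sqrt (\<Sum>k\<le>m. (y k)\<^sup>2))"

lemma sum_squares_pos:
  fixes y :: "nat \<Rightarrow> real"
  assumes "k \<le> m" "y k \<noteq> 0"
  shows "0 < (\<Sum>i\<le>m. (y i)\<^sup>2)"
proof -
  have "0 < (y k)\<^sup>2" using assms by simp
  also have "\<dots> \<le> (\<Sum>i\<le>m. (y i)\<^sup>2)"
    by (rule member_le_sum) (use assms in auto)
  finally show ?thesis .
qed

lemma sphere_normalize_in_nsphere:
  assumes "\<forall>i>m. y i = 0" "k \<le> m" "y k \<noteq> 0"
  shows "sphere_normalize m y \<in> topspace (nsphere m)"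
proof -
  have pos: "0 < (\<Sum>i\<le>m. (y i)\<^sup>2)" using assms(2,3) by (rule sum_squares_pos)
  have "(\<Sum>i\<le>m. (sphere_normalize m y i)\<^sup>2) = (\<Sum>i\<le>m. (y i)\<^sup>2) / (\<Sum>i\<le>m. (y i)\<^sup>2)"
    using pos by (simp add: sphere_normalize_def power_divide sum_divide_distrib[symmetric])
  with pos assms(1) show ?thesis
    by (simp add: nsphere sphere_normalize_def)
qed

lemma sphere_normalize_nsphere:
  "y \<in> topspace (nsphere m) \<Longrightarrow> sphere_normalize m y = y"
  by (simp add: nsphere sphere_normalize_def)

lemma continuous_map_sphere_normalize:
  assumes g: "continuous_map X (powertop_real UNIV) g"
    and vanish: "\<And>x i. x \<in> topspace X \<Longrightarrow> m < i \<Longrightarrow> g x i = 0"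
    and nonzero: "\<And>x. x \<in> topspace X \<Longrightarrow> \<exists>k\<le>m. g x k \<noteq> 0"
  shows "continuous_map X (nsphere m) (\<lambda>x. sphere_normalize m (g x))"
proof -
  have coord: "continuous_map X euclideanreal (\<lambda>x. g x i)" for i
    using g by (simp add: continuous_map_componentwise_UNIV)
  have "continuous_map X euclideanreal (\<lambda>x. g x i / sqrt (\<Sum>k\<le>m. (g x k)\<^sup>2))" for i
  proof (intro continuous_intros coord)
    fix x assume "x \<in> topspace X"
    then obtain k where "k \<le> m" "g x k \<noteq> 0" using nonzero by blast
    then show "sqrt (\<Sum>k\<le>m. (g x k)\<^sup>2) \<noteq> 0" using sum_squares_pos by force
  qed simp
  then have "continuous_map X (powertop_real UNIV) (\<lambda>x. sphere_normalize m (g x))"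
    by (simp add: continuous_map_componentwise_UNIV sphere_normalize_def)
  moreover have "sphere_normalize m (g x) \<in> topspace (nsphere m)" if "x \<in> topspace X" for x
    using nonzero[OF that] vanish[OF that] sphere_normalize_in_nsphere by blast
  ultimately show ?thesis
    by (auto simp: nsphere continuous_map_in_subtopology)
qed

lemma not_homotopic_id_through_Euclidean_space:
  assumes "continuous_map (Euclidean_space (Suc m)) (nsphere m) f"
  shows "\<not> homotopic_with (\<lambda>_. True) (nsphere m) (nsphere m) f id"
proof
  have incl: "continuous_map (nsphere m) (Euclidean_space (Suc m)) id"
    by (simp add: nsphere_def continuous_map_from_subtopology)
  assume "homotopic_with (\<lambda>_. True) (nsphere m) (nsphere m) f id"
  then have "contractible_space (nsphere m)"
    using homotopy_dominated_contractibility[OF assms incl] by simp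
  then show False
    using non_contractible_space_nsphere by blast
qed

lemma nsphere_segment_nonzero:
  assumes y: "y \<in> topspace (nsphere m)" and t: "t \<in> {0..1}"
    and acute: "0 < (\<Sum>i\<le>m. v i * y i)"
  shows "\<exists>k\<le>m. (1 - t) * y k + t * v k \<noteq> 0"
proof -
  have y1: "(\<Sum>i\<le>m. (y i)\<^sup>2) = 1" using y by (simp add: nsphere)
  have "(\<Sum>i\<le>m. ((1 - t) * y i + t * v i) * y i) = (\<Sum>i\<le>m. (1 - t) * (y i)\<^sup>2 + t * (v i * y i))"
    by (simp add: algebra_simps power2_eq_square)
  also have "\<dots> = (1 - t) * (\<Sum>i\<le>m. (y i)\<^sup>2) + t * (\<Sum>i\<le>m. v i * y i)"
    by (simp add: sum.distrib sum_distrib_left)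
  also have "\<dots> > 0"
  proof (cases "t = 0")
    case False
    then show ?thesis
      using acute t y1 by (intro add_nonneg_pos mult_pos_pos) auto
  qed (simp add: y1)
  finally have "(\<Sum>i\<le>m. ((1 - t) * y i + t * v i) * y i) \<noteq> 0" by simp
  then show ?thesis
    using sum.neutral[of "{..m}" "\<lambda>i. ((1 - t) * y i + t * v i) * y i"] by force
qed

lemma homotopic_id_sphere_normalize_acute:
  fixes \<Phi> :: "(nat \<Rightarrow> real) \<Rightarrow> nat \<Rightarrow> real"
  assumes \<Phi>_map: "continuous_map (powertop_real UNIV) (powertop_real UNIV) \<Phi>"
    and vanish: "\<And>x k. m < k \<Longrightarrow> \<Phi> x k = 0"
    and acute: "\<And>x. x \<in> topspace (nsphere m) \<Longrightarrow> 0 < (\<Sum>i\<le>m. \<Phi> x i * x i)"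
  shows "homotopic_with (\<lambda>_. True) (nsphere m) (nsphere m) id (\<lambda>y. sphere_normalize m (\<Phi> y))"
proof -
  let ?Z = "prod_topology (top_of_set {0..1::real}) (nsphere m)"
  define w where "w z = (\<lambda>i. (1 - fst z) * snd z i + fst z * \<Phi> (snd z) i)"
    for z :: "real \<times> (nat \<Rightarrow> real)"
  have fst_map: "continuous_map ?Z euclideanreal fst"
    using continuous_map_fst[of "top_of_set {0..1::real}" "nsphere m"]
    by (simp add: continuous_map_in_subtopology)
  have snd_map: "continuous_map ?Z (powertop_real UNIV) snd"
    using continuous_map_snd[of "top_of_set {0..1::real}" "nsphere m"]
    by (simp add: nsphere continuous_map_in_subtopology)
  have "continuous_map ?Z euclideanreal (\<lambda>z. snd z i)"
    and "continuous_map ?Z euclideanreal (\<lambda>z. \<Phi> (snd z) i)" for i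
    using continuous_map_compose[OF snd_map continuous_map_product_projection]
      continuous_map_compose[OF continuous_map_compose[OF snd_map \<Phi>_map] continuous_map_product_projection]
    by (simp_all add: o_def)
  then have w_map: "continuous_map ?Z (powertop_real UNIV) w"
    unfolding w_def continuous_map_componentwise_UNIV by (intro allI continuous_intros fst_map)
  show ?thesis
  proof (rule homotopic_with[THEN iffD2], simp, intro exI conjI ballI)
    show "continuous_map ?Z (nsphere m) (\<lambda>z. sphere_normalize m (w z))"
    proof (rule continuous_map_sphere_normalize[OF w_map])
      fix z i assume "z \<in> topspace ?Z" "m < i"
      then show "w z i = 0" by (auto simp: w_def vanish nsphere)
    next
      fix z assume "z \<in> topspace ?Z"
      then show "\<exists>k\<le>m. w z k \<noteq> 0"
        using nsphere_segment_nonzero acute by (cases z) (auto simp: w_def)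
    qed
  next
    fix y assume "y \<in> topspace (nsphere m)"
    then show "sphere_normalize m (w (0, y)) = id y"
      by (simp add: w_def sphere_normalize_nsphere)
  next
    fix y show "sphere_normalize m (w (1, y)) = sphere_normalize m (\<Phi> y)"
      by (simp add: w_def)
  qed simp
qed

(* If \<Phi> had no zero, y \<mapsto> \<Phi> y / |\<Phi> y| would factor a map homotopic to the identity of the
   sphere through the contractible Euclidean space. *)
lemma acute_angle_zero_nat:
  fixes \<Phi> :: "(nat \<Rightarrow> real) \<Rightarrow> nat \<Rightarrow> real"
  assumes cont: "continuous_on UNIV \<Phi>"
    and vanish: "\<And>x k. m < k \<Longrightarrow> \<Phi> x k = 0"
    and acute: "\<And>x. x \<in> topspace (nsphere m) \<Longrightarrow> 0 < (\<Sum>i\<le>m. \<Phi> x i * x i)"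
  shows "\<exists>x. \<forall>k. \<Phi> x k = 0"
proof (rule ccontr)
  assume "\<not> ?thesis"
  then have nonzero: "\<exists>k\<le>m. \<Phi> x k \<noteq> 0" for x
    using vanish by (meson not_le)
  have \<Phi>_map: "continuous_map (powertop_real UNIV) (powertop_real UNIV) \<Phi>"
    using cont by (simp add: euclidean_product_topology)
  have "continuous_map (Euclidean_space (Suc m)) (nsphere m) (\<lambda>y. sphere_normalize m (\<Phi> y))"
    unfolding Euclidean_space_def
    by (intro continuous_map_sphere_normalize continuous_map_from_subtopology \<Phi>_map vanish nonzero)
  then show False
    using not_homotopic_id_through_Euclidean_space homotopic_with_symD
      homotopic_id_sphere_normalize_acute[OF \<Phi>_map vanish acute] by blast
qed

lemma acute_angle_zero:
  fixes \<Phi> :: "('a \<Rightarrow> real) \<Rightarrow> 'a \<Rightarrow> real"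
  assumes "finite S" "S \<noteq> {}" and cont: "continuous_on UNIV \<Phi>" and "R > 0"
    and acute: "\<And>x. (\<Sum>s\<in>S. (x s)\<^sup>2) = R\<^sup>2 \<Longrightarrow> 0 < (\<Sum>s\<in>S. \<Phi> x s * x s)"
  shows "\<exists>x. \<forall>s\<in>S. \<Phi> x s = 0"
proof -
  have "card S \<noteq> 0" using assms(1,2) by simp
  then obtain m where m: "card S = Suc m" using not0_implies_Suc by blast
  then obtain e where e: "bij_betw e {..m} S"
    using ex_bij_betw_nat_finite[OF assms(1)] by (auto simp: atLeast0LessThan lessThan_Suc_atMost)
  define enc where "enc y = (\<lambda>s. R * y (inv_into {..m} e s))" for y :: "nat \<Rightarrow> real"
  define \<Psi> where "\<Psi> y k = (if k \<le> m then \<Phi> (enc y) (e k) else 0)" for y k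
  have enc_e: "enc y (e i) = R * y i" if "i \<le> m" for y i
    using e that by (simp add: enc_def bij_betw_inv_into_left)
  have sum_e: "(\<Sum>s\<in>S. g s) = (\<Sum>i\<le>m. g (e i))" for g :: "'a \<Rightarrow> real"
    by (rule sum.reindex_bij_betw[OF e, symmetric])
  have "continuous_on UNIV enc"
    unfolding enc_def
    by (rule continuous_on_coordinatewise_then_product, rule continuous_on_mult_left) simp
  then have \<Phi>_enc: "continuous_on UNIV (\<lambda>y. \<Phi> (enc y) s)" for s
    by (rule continuous_on_product_then_coordinatewise[OF continuous_on_compose2[OF cont]]) auto
  have "continuous_on UNIV \<Psi>"
  proof (rule continuous_on_coordinatewise_then_product)
    show "continuous_on UNIV (\<lambda>y. \<Psi> y k)" for k
      by (cases "k \<le> m") (simp_all add: \<Psi>_def \<Phi>_enc)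
  qed
  moreover have "0 < (\<Sum>i\<le>m. \<Psi> y i * y i)" if "y \<in> topspace (nsphere m)" for y
  proof -
    have "(\<Sum>s\<in>S. (enc y s)\<^sup>2) = R\<^sup>2 * (\<Sum>i\<le>m. (y i)\<^sup>2)"
      by (simp add: sum_e enc_e power_mult_distrib sum_distrib_left)
    also have "\<dots> = R\<^sup>2" using that by (simp add: nsphere)
    finally have "0 < (\<Sum>s\<in>S. \<Phi> (enc y) s * enc y s)" by (rule acute)
    also have "\<dots> = R * (\<Sum>i\<le>m. \<Psi> y i * y i)"
      by (simp add: sum_e enc_e \<Psi>_def sum_distrib_left algebra_simps)
    finally show ?thesis using \<open>R > 0\<close> by (simp add: zero_less_mult_iff)
  qed
  ultimately obtain y where y: "\<And>k. \<Psi> y k = 0"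
    using acute_angle_zero_nat[of \<Psi> m] by (auto simp: \<Psi>_def)
  have "\<Phi> (enc y) (e k) = 0" if "k \<le> m" for k
    using that y[of k] by (simp add: \<Psi>_def)
  then show ?thesis
    using e by (auto simp: bij_betw_def)
qed

lemma coercive_field_has_zero:
  fixes \<Phi> :: "('a \<Rightarrow> real) \<Rightarrow> 'a \<Rightarrow> real"
  assumes "finite S" "S \<noteq> {}" and cont: "continuous_on UNIV \<Phi>" and "a > 0"
    and c: "\<And>s. s \<in> S \<Longrightarrow> 0 \<le> c s"
    and coercive: "\<And>x. a * (\<Sum>s\<in>S. (x s)\<^sup>2) - (\<Sum>s\<in>S. c s * \<bar>x s\<bar>) \<le> (\<Sum>s\<in>S. \<Phi> x s * x s)"
  shows "\<exists>x. \<forall>s\<in>S. \<Phi> x s = 0"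
proof -
  define C where "C = (\<Sum>s\<in>S. c s)"
  define R where "R = C / a + 1"
  have "C \<ge> 0" unfolding C_def using c by (simp add: sum_nonneg)
  then have "R > 0" using \<open>a > 0\<close> by (simp add: R_def add_nonneg_pos)
  show ?thesis
  proof (rule acute_angle_zero[OF assms(1-3) \<open>R > 0\<close>])
    fix x assume x: "(\<Sum>s\<in>S. (x s)\<^sup>2) = R\<^sup>2"
    have "\<bar>x s\<bar> \<le> R" if "s \<in> S" for s
    proof -
      have "(x s)\<^sup>2 \<le> R\<^sup>2"
        using member_le_sum[of s S "\<lambda>s. (x s)\<^sup>2"] that assms(1) x by simp
      then show ?thesis using abs_le_square_iff[of "x s" R] \<open>R > 0\<close> by simp
    qed
    then have "(\<Sum>s\<in>S. c s * \<bar>x s\<bar>) \<le> C * R"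
      unfolding C_def sum_distrib_right by (intro sum_mono mult_left_mono c)
    moreover have "a * R\<^sup>2 - C * R = a * R"
      using \<open>a > 0\<close> by (simp add: R_def power2_eq_square field_simps)
    moreover have "0 < a * R" using \<open>a > 0\<close> \<open>R > 0\<close> by simp
    moreover have "a * R\<^sup>2 - (\<Sum>s\<in>S. c s * \<bar>x s\<bar>) \<le> (\<Sum>s\<in>S. \<Phi> x s * x s)"
      using coercive[of x] by (simp only: x)
    ultimately show "0 < (\<Sum>s\<in>S. \<Phi> x s * x s)" by linarith
  qed
qed

lemma sum_cyclic_shift:
  fixes \<phi> :: "nat \<Rightarrow> 'b::comm_monoid_add"
  shows "(\<Sum>i<N. \<phi> (Suc i mod N)) = (\<Sum>i<N. \<phi> i)"
proof (cases N)
  case (Suc n)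
  have "(\<Sum>i<N. \<phi> (Suc i mod N)) = (\<Sum>i<n. \<phi> (Suc i)) + \<phi> 0"
    using Suc by (simp add: sum.lessThan_Suc)
  also have "\<dots> = (\<Sum>i<N. \<phi> i)"
    unfolding Suc sum.lessThan_Suc_shift by (simp add: add.commute)
  finally show ?thesis .
qed simp

lemma cyclic_flux_energy:
  fixes u :: "nat \<Rightarrow> real" and a b :: real
  assumes "N \<ge> 1"
  defines "F \<equiv> \<lambda>i. a * (u (Suc i mod N) + u i) - b * (u (Suc i mod N) - u i)"
  shows "(\<Sum>i<N. (F i - F ((i + N - 1) mod N)) * u i) = b * (\<Sum>i<N. (u (Suc i mod N) - u i)\<^sup>2)"
proof -
  have pred_Suc: "(Suc i mod N + N - 1) mod N = i" if "i < N" for i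
  proof -
    have "(Suc i mod N + N - 1) mod N = (Suc i mod N + (N - 1)) mod N"
      using assms(1) by simp
    also have "\<dots> = (Suc i + (N - 1)) mod N"
      by (rule mod_add_left_eq)
    also have "\<dots> = (i + N) mod N"
      using assms(1) by simp
    finally show ?thesis using that by simp
  qed
  have "(\<Sum>i<N. F ((i + N - 1) mod N) * u i)
      = (\<Sum>i<N. F ((Suc i mod N + N - 1) mod N) * u (Suc i mod N))"
    by (rule sum_cyclic_shift[symmetric])
  also have "\<dots> = (\<Sum>i<N. F i * u (Suc i mod N))"
    using pred_Suc by (intro sum.cong) auto
  finally have "(\<Sum>i<N. (F i - F ((i + N - 1) mod N)) * u i) = (\<Sum>i<N. F i * (u i - u (Suc i mod N)))"
    by (simp add: algebra_simps sum_subtractf)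
  also have "\<dots> = (\<Sum>i<N. a * ((u i)\<^sup>2 - (u (Suc i mod N))\<^sup>2) + b * (u (Suc i mod N) - u i)\<^sup>2)"
    by (rule sum.cong) (simp_all add: F_def algebra_simps power2_eq_square)
  also have "\<dots> = a * ((\<Sum>i<N. (u i)\<^sup>2) - (\<Sum>i<N. (u (Suc i mod N))\<^sup>2)) + b * (\<Sum>i<N. (u (Suc i mod N) - u i)\<^sup>2)"
    by (simp add: sum.distrib sum_distrib_left sum_subtractf right_diff_distrib)
  also have "\<dots> = b * (\<Sum>i<N. (u (Suc i mod N) - u i)\<^sup>2)"
    using sum_cyclic_shift[of "\<lambda>i. (u i)\<^sup>2" N] by simp
  finally show ?thesis .
qed

definition flux_diff :: "nat \<Rightarrow> real \<Rightarrow> nat \<Rightarrow> real \<Rightarrow> real \<Rightarrow> (nat \<Rightarrow> int \<Rightarrow> real) \<Rightarrow> nat \<Rightarrow> int \<Rightarrow> real" where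
  "flux_diff N vstar L dx dt h i j =
     (flux N vstar L dx dt h i j - flux N vstar L dx dt h ((i + N - 1) mod N) j) / (dx * dvel vstar L)"

lemma flux_diff_energy_nonneg:
  assumes "N \<ge> 1" "dx > 0" "dt > 0" "dvel vstar L > 0"
  shows "0 \<le> (\<Sum>i<N. flux_diff N vstar L dx dt h i j * h i j)"
proof -
  let ?b = "dvel vstar L * (dx / (2 * dt))"
  have "(\<Sum>i<N. flux_diff N vstar L dx dt h i j * h i j)
      = ?b * (\<Sum>i<N. (h (Suc i mod N) j - h i j)\<^sup>2) / (dx * dvel vstar L)"
    using cyclic_flux_energy[OF assms(1), where u = "\<lambda>i. h i j" and a = "dvel vstar L * (vnode vstar L j / 2)" and b = ?b]
    by (simp add: flux_diff_def flux_def sum_divide_distrib[symmetric])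
  also have "\<dots> \<ge> 0"
    using assms(2-4) by (intro divide_nonneg_pos mult_nonneg_nonneg sum_nonneg) auto
  finally show ?thesis .
qed

lemma flux_diff_total_energy_nonneg:
  fixes u :: "'k \<Rightarrow> nat \<Rightarrow> int \<Rightarrow> real"
  assumes "N \<ge> 1" "dx > 0" "dt > 0" "dvel vstar L > 0"
  shows "0 \<le> (\<Sum>(k, i, j) \<in> K \<times> {..<N} \<times> vel_idx L. flux_diff N vstar L dx dt (u k) i j * u k i j)"
proof -
  have "0 \<le> (\<Sum>k\<in>K. \<Sum>j\<in>vel_idx L. \<Sum>i<N. flux_diff N vstar L dx dt (u k) i j * u k i j)"
    using flux_diff_energy_nonneg[OF assms] by (simp add: sum_nonneg)
  also have "\<dots> = (\<Sum>k\<in>K. \<Sum>i<N. \<Sum>j\<in>vel_idx L. flux_diff N vstar L dx dt (u k) i j * u k i j)"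
    by (rule sum.cong[OF refl], rule sum.swap)
  finally show ?thesis
    by (simp add: sum.cartesian_product)
qed

lemma implicit_step_lower_bound:
  fixes a a0 b B dt :: real
  assumes "dt > 0" "\<bar>b\<bar> \<le> B"
  shows "a\<^sup>2 / dt - (\<bar>a0\<bar> / dt + B) * \<bar>a\<bar> \<le> ((a - a0) / dt - b) * a"
proof -
  have "a0 / dt * a \<le> \<bar>a0 / dt * a\<bar>" by (rule abs_ge_self)
  also have "\<dots> = \<bar>a0\<bar> / dt * \<bar>a\<bar>" using assms(1) by (simp add: abs_mult)
  finally have "a0 / dt * a \<le> \<bar>a0\<bar> / dt * \<bar>a\<bar>" .
  moreover have "b * a \<le> \<bar>b\<bar> * \<bar>a\<bar>" by (simp add: abs_mult[symmetric])
  moreover have "\<bar>b\<bar> * \<bar>a\<bar> \<le> B * \<bar>a\<bar>" using assms(2) by (simp add: mult_right_mono)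
  moreover have "((a - a0) / dt - b) * a = a\<^sup>2 / dt - a0 / dt * a - b * a"
    using assms(1) by (simp add: field_simps power2_eq_square)
  ultimately show ?thesis by (simp add: algebra_simps)
qed

lemma implicit_step_energy_estimate:
  fixes u u0 r B :: "'k \<Rightarrow> nat \<Rightarrow> int \<Rightarrow> real" and K :: "'k set"
  assumes "N \<ge> 1" "dx > 0" "dt > 0" "dvel vstar L > 0"
    and bound: "\<And>k i j. \<bar>r k i j\<bar> \<le> B k i j"
  defines "S \<equiv> K \<times> {..<N} \<times> vel_idx L"
  shows "1 / dt * (\<Sum>(k, i, j)\<in>S. (u k i j)\<^sup>2) - (\<Sum>(k, i, j)\<in>S. (\<bar>u0 k i j\<bar> / dt + B k i j) * \<bar>u k i j\<bar>)
    \<le> (\<Sum>(k, i, j)\<in>S. ((u k i j - u0 k i j) / dt + flux_diff N vstar L dx dt (u k) i j - r k i j) * u k i j)"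
proof -
  define A where "A = (\<lambda>(k, i, j). ((u k i j - u0 k i j) / dt - r k i j) * u k i j)"
  define E where "E = (\<lambda>(k, i, j). flux_diff N vstar L dx dt (u k) i j * u k i j)"
  have "(\<lambda>(k, i, j). (u k i j)\<^sup>2 / dt - (\<bar>u0 k i j\<bar> / dt + B k i j) * \<bar>u k i j\<bar>) s \<le> A s" for s
    by (cases s) (simp add: A_def implicit_step_lower_bound[OF \<open>dt > 0\<close> bound])
  then have "1 / dt * (\<Sum>(k, i, j)\<in>S. (u k i j)\<^sup>2) - (\<Sum>(k, i, j)\<in>S. (\<bar>u0 k i j\<bar> / dt + B k i j) * \<bar>u k i j\<bar>)
      \<le> sum A S"
    using sum_mono[of S "\<lambda>(k, i, j). (u k i j)\<^sup>2 / dt - (\<bar>u0 k i j\<bar> / dt + B k i j) * \<bar>u k i j\<bar>" A]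
    by (simp add: sum_subtractf sum_divide_distrib case_prod_beta')
  moreover have "0 \<le> sum E S"
    unfolding E_def S_def by (rule flux_diff_total_energy_nonneg[OF assms(1-4)])
  moreover have "(\<lambda>(k, i, j). ((u k i j - u0 k i j) / dt + flux_diff N vstar L dx dt (u k) i j - r k i j) * u k i j) s
      = A s + E s" for s
    by (cases s) (simp add: A_def E_def algebra_simps)
  ultimately show ?thesis by (simp add: sum.distrib)
qed

lemma implicit_transport_system_solvable:
  fixes u0 :: "'k::finite \<Rightarrow> nat \<Rightarrow> int \<Rightarrow> real"
    and Src :: "('k \<Rightarrow> nat \<Rightarrow> int \<Rightarrow> real) \<Rightarrow> 'k \<Rightarrow> nat \<Rightarrow> int \<Rightarrow> real"
  assumes "N \<ge> 1" "L \<ge> 1" "vstar > 0" "dx > 0" "dt > 0"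
    and cont: "\<And>k i j. continuous_on UNIV (\<lambda>u. Src u k i j)"
    and bounded: "\<And>k i j. \<exists>b. \<forall>u. \<bar>Src u k i j\<bar> \<le> b"
  shows "\<exists>u. \<forall>k. \<forall>i<N. \<forall>j\<in>vel_idx L.
           (u k i j - u0 k i j) / dt + flux_diff N vstar L dx dt (u k) i j = Src u k i j"
proof -
  have dv: "dvel vstar L > 0" using assms(2,3) by (simp add: dvel_def)
  define B where "B k i j = (SOME b. \<forall>u. \<bar>Src u k i j\<bar> \<le> b)" for k i j
  have bound: "\<bar>Src u k i j\<bar> \<le> B k i j" for u k i j
    using someI_ex[OF bounded[of k i j]] by (simp add: B_def)
  define S where "S = (UNIV :: 'k set) \<times> {..<N} \<times> vel_idx L"
  define unc where "unc x = (\<lambda>k i j. x (k, i, j))" for x :: "'k \<times> nat \<times> int \<Rightarrow> real"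
  define res where "res u k i j = (u k i j - u0 k i j) / dt + flux_diff N vstar L dx dt (u k) i j - Src u k i j"
    for u k i j
  define \<Phi> where "\<Phi> x = (\<lambda>(k, i, j). res (unc x) k i j)" for x
  define c where "c = (\<lambda>(k, i, j). \<bar>u0 k i j\<bar> / dt + B k i j)"
  have "finite S" by (simp add: S_def vel_idx_def finite_cartesian_product)
  moreover have "S \<noteq> {}" using assms(1,2) by (auto simp: S_def vel_idx_def lessThan_empty_iff)
  moreover have "continuous_on UNIV \<Phi>"
  proof (rule continuous_on_coordinatewise_then_product)
    have "continuous_on UNIV unc"
      unfolding unc_def by (intro continuous_on_coordinatewise_then_product) simp
    then have "continuous_on UNIV (\<lambda>x. Src (unc x) k i j)" for k i j
      by (rule continuous_on_compose2[OF cont]) auto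
    then show "continuous_on UNIV (\<lambda>x. \<Phi> x s)" for s
      unfolding \<Phi>_def res_def flux_diff_def flux_def unc_def
      using assms(4,5) dv by (cases s) (auto intro!: continuous_intros)
  qed
  moreover have "0 \<le> c s" for s
  proof -
    have "0 \<le> B k i j" for k i j
      using abs_ge_zero[of "Src u0 k i j"] bound[of u0 k i j] by linarith
    then show ?thesis using \<open>dt > 0\<close> by (cases s) (simp add: c_def)
  qed
  moreover have "1 / dt * (\<Sum>s\<in>S. (x s)\<^sup>2) - (\<Sum>s\<in>S. c s * \<bar>x s\<bar>) \<le> (\<Sum>s\<in>S. \<Phi> x s * x s)" for x
    using implicit_step_energy_estimate[where K = UNIV and u = "unc x" and u0 = u0 and r = "Src (unc x)",
        OF assms(1,4,5) dv bound]
    by (simp add: S_def \<Phi>_def c_def res_def unc_def case_prod_beta')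
  ultimately obtain x where "\<forall>s\<in>S. \<Phi> x s = 0"
    using coercive_field_has_zero[of S \<Phi> "1 / dt" c] \<open>dt > 0\<close> by auto
  then show ?thesis
    by (intro exI[of _ "unc x"]) (auto simp: S_def \<Phi>_def res_def)
qed

lemma continuous_on_nested_coordinate:
  "continuous_on UNIV (\<lambda>u :: 'a \<Rightarrow> 'b \<Rightarrow> 'c \<Rightarrow> 'd::topological_space. u a b c)"
  by (rule continuous_on_product_then_coordinatewise, rule continuous_on_product_then_coordinatewise) simp

lemma abs_clamp_le: "\<bar>min (max (a::real) lo) hi\<bar> \<le> \<bar>lo\<bar> + \<bar>hi\<bar>"
  by (simp add: min_def max_def abs_if)

lemma abs_trunc_f_le:
  "\<bar>trunc_f rho g1 g2 chi h i j\<bar> \<le> \<bar>(rho - g1) * chi j\<bar> + \<bar>(rho + g2) * chi j\<bar>"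
  unfolding trunc_f_def by (rule abs_clamp_le)

lemma abs_trunc_g_le:
  "\<bar>trunc_g rho g1 g2 chi h i j\<bar> \<le> \<bar>inverse (rho + g2) * chi j\<bar> + \<bar>inverse (rho - g1) * chi j\<bar>"
  unfolding trunc_g_def by (rule abs_clamp_le)

lemma abs_trunc_dens_le:
  assumes "\<And>k. \<bar>h i k\<bar> \<le> b k"
  shows "\<bar>trunc_dens vstar L h i\<bar> \<le> (\<Sum>k\<in>vel_idx L. \<bar>dvel vstar L\<bar> * b k)"
proof -
  have "\<bar>trunc_dens vstar L h i\<bar> \<le> (\<Sum>k\<in>vel_idx L. \<bar>dvel vstar L * h i k\<bar>)"
    unfolding trunc_dens_def by (rule sum_abs)
  also have "\<dots> \<le> (\<Sum>k\<in>vel_idx L. \<bar>dvel vstar L\<bar> * b k)"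
    unfolding abs_mult by (intro sum_mono mult_left_mono assms) simp
  finally show ?thesis .
qed

lemma abs_diff_mult_le:
  fixes c d t K T :: real
  assumes "\<bar>d\<bar> \<le> K" "\<bar>t\<bar> \<le> T"
  shows "\<bar>c - d * t\<bar> \<le> \<bar>c\<bar> + K * T"
proof -
  have "\<bar>d * t\<bar> \<le> K * T"
    unfolding abs_mult using assms by (intro mult_mono) auto
  then show ?thesis using abs_triangle_ineq4[of c "d * t"] by linarith
qed

lemma abs_trunc_reactions_le:
  "\<bar>chi1 j - trunc_dens vstar L (trunc_g rho g1 g2 chi2 g) i * trunc_f rho g1 g2 chi1 f i j\<bar>
     \<le> \<bar>chi1 j\<bar> + (\<Sum>k\<in>vel_idx L. \<bar>dvel vstar L\<bar> * (\<bar>inverse (rho + g2) * chi2 k\<bar> + \<bar>inverse (rho - g1) * chi2 k\<bar>))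
                  * (\<bar>(rho - g1) * chi1 j\<bar> + \<bar>(rho + g2) * chi1 j\<bar>)"
  "\<bar>chi2 j - trunc_dens vstar L (trunc_f rho g1 g2 chi1 f) i * trunc_g rho g1 g2 chi2 g i j\<bar>
     \<le> \<bar>chi2 j\<bar> + (\<Sum>k\<in>vel_idx L. \<bar>dvel vstar L\<bar> * (\<bar>(rho - g1) * chi1 k\<bar> + \<bar>(rho + g2) * chi1 k\<bar>))
                  * (\<bar>inverse (rho + g2) * chi2 j\<bar> + \<bar>inverse (rho - g1) * chi2 j\<bar>)"
  by (intro abs_diff_mult_le abs_trunc_dens_le abs_trunc_f_le abs_trunc_g_le)+

theorem lemma5p3:
  fixes N L :: nat and vstar dx dt rho g1 g2 :: real
    and chi1 chi2 :: "int \<Rightarrow> real"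
    and fn gn :: "nat \<Rightarrow> int \<Rightarrow> real"
  assumes "N \<ge> 1" and "L \<ge> 1" and "vstar > 0" and "dx > 0" and "dt > 0"
    and "rho > 0" and "0 < g1" and "g1 < rho" and "g2 > 0"
    and "\<forall>j\<in>vel_idx L. chi1 j > 0 \<and> chi2 j > 0"
    and "\<forall>j\<in>vel_idx L. chi1 j = chi1 (1 - j) \<and> chi2 j = chi2 (1 - j)"
    and "(\<Sum>j\<in>vel_idx L. dvel vstar L * chi1 j) = 1"
    and "(\<Sum>j\<in>vel_idx L. dvel vstar L * chi2 j) = 1"
  shows "\<exists>f g :: nat \<Rightarrow> int \<Rightarrow> real.
    \<forall>i<N. \<forall>j\<in>vel_idx L.
      (f i j - fn i j) / dt
        + (flux N vstar L dx dt f i j - flux N vstar L dx dt f ((i + N - 1) mod N) j)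
          / (dx * dvel vstar L)
        = chi1 j - trunc_dens vstar L (trunc_g rho g1 g2 chi2 g) i
                   * trunc_f rho g1 g2 chi1 f i j
    \<and> (g i j - gn i j) / dt
        + (flux N vstar L dx dt g i j - flux N vstar L dx dt g ((i + N - 1) mod N) j)
          / (dx * dvel vstar L)
        = chi2 j - trunc_dens vstar L (trunc_f rho g1 g2 chi1 f) i
                   * trunc_g rho g1 g2 chi2 g i j"
proof -
  define u0 where "u0 b = (if b then fn else gn)" for b
  define Src where "Src u b i j =
    (if b then chi1 j - trunc_dens vstar L (trunc_g rho g1 g2 chi2 (u False)) i * trunc_f rho g1 g2 chi1 (u True) i j
     else chi2 j - trunc_dens vstar L (trunc_f rho g1 g2 chi1 (u True)) i * trunc_g rho g1 g2 chi2 (u False) i j)"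
    for u :: "bool \<Rightarrow> nat \<Rightarrow> int \<Rightarrow> real" and b i j
  have "continuous_on UNIV (\<lambda>u. Src u b i j)" for b i j
    unfolding Src_def trunc_dens_def trunc_f_def trunc_g_def
    by (cases b) (simp_all add: continuous_intros continuous_on_nested_coordinate)
  moreover have "\<exists>B. \<forall>u. \<bar>Src u b i j\<bar> \<le> B" for b i j
  proof (cases b)
    case True
    then show ?thesis unfolding Src_def using abs_trunc_reactions_le(1) by simp blast
  next
    case False
    then show ?thesis unfolding Src_def using abs_trunc_reactions_le(2) by simp blast
  qed
  ultimately have "\<exists>u. \<forall>b. \<forall>i<N. \<forall>j\<in>vel_idx L.
      (u b i j - u0 b i j) / dt + flux_diff N vstar L dx dt (u b) i j = Src u b i j"
    by (rule implicit_transport_system_solvable[OF assms(1-5)])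
  then obtain u where u: "\<And>b i j. i < N \<Longrightarrow> j \<in> vel_idx L \<Longrightarrow>
      (u b i j - u0 b i j) / dt + flux_diff N vstar L dx dt (u b) i j = Src u b i j"
    by blast
  show ?thesis
    using u[of _ _ True] u[of _ _ False]
    by (intro exI[of _ "u True"] exI[of _ "u False"]) (simp add: u0_def Src_def flux_diff_def)
qed

end
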